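(* Let $D$ be a locatable digraph of order $n$ with $\gamma_{OL}(D)=n$. If a vertex of $D$ is not domination-forced, then it is location-forced; and if a vertex of $D$ is not location-forced, then it is domination-forced.
   Context: Digraphs are finite and may contain loops; between two distinct vertices there may be arcs in one or both directions, no repeated arcs. $N^-(v)=\{u: uv\text{ is an arc}\}$ (contains $v$ iff $v$ has a loop). An OLD set of $D$ is a set $S\subseteq V(D)$ such that every vertex has an in-neighbour in $S$ and for every two distinct vertices $u,w$ some vertex of $S$ lies in exactly one of $N^-(u),N^-(w)$. $D$ is locatable if it has an OLD set, and then $\gamma_{OL}(D)$ is the minimum size of an OLD set. A vertex $v$ is domination-forced if some vertex $w$ has $N^-(w)=\{v\}$; it is location-forced if there are distinct vertices $x,y$ with $N^-(x)\ominus N^-(y)=\{v\}$ ($\ominus$ = symmetric difference). *)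

theory Defs
  imports Main
begin

text \<open>Loops allowed; no repeated arcs automatically.\<close>

definition digraph :: "'a set \<Rightarrow> ('a \<Rightarrow> 'a \<Rightarrow> bool) \<Rightarrow> bool" where
  "digraph V arc \<longleftrightarrow> finite V \<and> (\<forall>u v. arc u v \<longrightarrow> u \<in> V \<and> v \<in> V)"

definition in_nbhd :: "'a set \<Rightarrow> ('a \<Rightarrow> 'a \<Rightarrow> bool) \<Rightarrow> 'a \<Rightarrow> 'a set" where
  "in_nbhd V arc v = {u \<in> V. arc u v}"

definition is_OLD_set :: "'a set \<Rightarrow> ('a \<Rightarrow> 'a \<Rightarrow> bool) \<Rightarrow> 'a set \<Rightarrow> bool" where
  "is_OLD_set V arc S \<longleftrightarrow> S \<subseteq> V
     \<and> (\<forall>v\<in>V. in_nbhd V arc v \<inter> S \<noteq> {})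
     \<and> (\<forall>u\<in>V. \<forall>w\<in>V. u \<noteq> w \<longrightarrow>
          (\<exists>s\<in>S. (s \<in> in_nbhd V arc u) \<noteq> (s \<in> in_nbhd V arc w)))"

definition locatable :: "'a set \<Rightarrow> ('a \<Rightarrow> 'a \<Rightarrow> bool) \<Rightarrow> bool" where
  "locatable V arc \<longleftrightarrow> (\<exists>S. is_OLD_set V arc S)"

definition gamma_OL :: "'a set \<Rightarrow> ('a \<Rightarrow> 'a \<Rightarrow> bool) \<Rightarrow> nat" where
  "gamma_OL V arc = (LEAST k. \<exists>S. is_OLD_set V arc S \<and> card S = k)"

definition domination_forced :: "'a set \<Rightarrow> ('a \<Rightarrow> 'a \<Rightarrow> bool) \<Rightarrow> 'a \<Rightarrow> bool" where
  "domination_forced V arc v \<longleftrightarrow> (\<exists>w\<in>V. in_nbhd V arc w = {v})"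

definition location_forced :: "'a set \<Rightarrow> ('a \<Rightarrow> 'a \<Rightarrow> bool) \<Rightarrow> 'a \<Rightarrow> bool" where
  "location_forced V arc v \<longleftrightarrow> (\<exists>x\<in>V. \<exists>y\<in>V. x \<noteq> y \<and>
      (in_nbhd V arc x - in_nbhd V arc y) \<union> (in_nbhd V arc y - in_nbhd V arc x) = {v})"

end

theory Submission
  imports Defs
begin

text \<open>If \<open>\<gamma>\<^sub>O\<^sub>L(D) = n\<close>, then no set \<open>V - {v}\<close> is an OLD set, although \<open>V\<close> is one.
  So \<open>V - {v}\<close> either fails to dominate some vertex \<open>w\<close>, whose in-neighbourhood is
  then \<open>{v}\<close>, or fails to separate two vertices \<open>x \<noteq> y\<close>, whose in-neighbourhoods then
  differ exactly in \<open>v\<close>.\<close>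

lemma in_nbhd_subset: "in_nbhd V arc x \<subseteq> V"
  unfolding in_nbhd_def by auto

lemma is_OLD_set_mono:
  assumes "is_OLD_set V arc S" and "S \<subseteq> T" and "T \<subseteq> V"
  shows "is_OLD_set V arc T"
  using assms unfolding is_OLD_set_def by blast

lemma locatable_iff_is_OLD_set_vertices: "locatable V arc \<longleftrightarrow> is_OLD_set V arc V"
proof
  assume "locatable V arc"
  then obtain S where "is_OLD_set V arc S" unfolding locatable_def by blast
  moreover from this have "S \<subseteq> V" unfolding is_OLD_set_def by blast
  ultimately show "is_OLD_set V arc V" by (rule is_OLD_set_mono) simp
qed (auto simp: locatable_def)

lemma gamma_OL_le_card:
  assumes "is_OLD_set V arc S"
  shows "gamma_OL V arc \<le> card S"
  unfolding gamma_OL_def by (rule Least_le) (use assms in blast)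

lemma not_is_OLD_set_delete_if_gamma_OL_eq_card:
  assumes "finite V" and "gamma_OL V arc = card V" and "v \<in> V"
  shows "\<not> is_OLD_set V arc (V - {v})"
proof
  assume "is_OLD_set V arc (V - {v})"
  then have "gamma_OL V arc \<le> card (V - {v})" by (rule gamma_OL_le_card)
  moreover have "card (V - {v}) < card V"
    using assms(1,3) by (rule card_Diff1_less)
  ultimately show False using assms(2) by simp
qed

lemma domination_forced_if_in_nbhd_disjoint_delete:
  assumes "is_OLD_set V arc V" and "w \<in> V" and "in_nbhd V arc w \<inter> (V - {v}) = {}"
  shows "domination_forced V arc v"
proof -
  have "in_nbhd V arc w \<noteq> {}"
    using assms(1,2) unfolding is_OLD_set_def by blast
  then have "in_nbhd V arc w = {v}"
    using assms(3) in_nbhd_subset[of V arc w] by blast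
  then show ?thesis
    using assms(2) unfolding domination_forced_def by blast
qed

lemma location_forced_if_in_nbhds_agree_off:
  assumes "is_OLD_set V arc V" and "x \<in> V" and "y \<in> V" and "x \<noteq> y"
    and agree: "\<forall>s\<in>V - {v}. (s \<in> in_nbhd V arc x) = (s \<in> in_nbhd V arc y)"
  shows "location_forced V arc v"
proof -
  obtain s where s: "s \<in> V" "(s \<in> in_nbhd V arc x) \<noteq> (s \<in> in_nbhd V arc y)"
    using assms(1-4) unfolding is_OLD_set_def by blast
  with agree have "s = v" by blast
  with s agree have "(in_nbhd V arc x - in_nbhd V arc y) \<union> (in_nbhd V arc y - in_nbhd V arc x) = {v}"
    using in_nbhd_subset[of V arc x] in_nbhd_subset[of V arc y] by blast
  then show ?thesis
    using assms(2-4) unfolding location_forced_def by blast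
qed

lemma forced_if_not_is_OLD_set_delete:
  assumes "is_OLD_set V arc V" and "\<not> is_OLD_set V arc (V - {v})"
  shows "domination_forced V arc v \<or> location_forced V arc v"
proof (cases "\<forall>w\<in>V. in_nbhd V arc w \<inter> (V - {v}) \<noteq> {}")
  case False
  then obtain w where "w \<in> V" "in_nbhd V arc w \<inter> (V - {v}) = {}" by blast
  with assms(1) have "domination_forced V arc v"
    by (rule domination_forced_if_in_nbhd_disjoint_delete)
  then show ?thesis ..
next
  case True
  with assms(2) have "\<not> (\<forall>x\<in>V. \<forall>y\<in>V. x \<noteq> y \<longrightarrow>
      (\<exists>s\<in>V - {v}. (s \<in> in_nbhd V arc x) \<noteq> (s \<in> in_nbhd V arc y)))"
    unfolding is_OLD_set_def by simp
  then obtain x y where "x \<in> V" "y \<in> V" "x \<noteq> y"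
    "\<forall>s\<in>V - {v}. (s \<in> in_nbhd V arc x) = (s \<in> in_nbhd V arc y)"
    by blast
  with assms(1) have "location_forced V arc v"
    by (rule location_forced_if_in_nbhds_agree_off)
  then show ?thesis ..
qed

theorem corollary6:
  fixes V :: "'a set" and arc :: "'a \<Rightarrow> 'a \<Rightarrow> bool" and n :: nat
  assumes "digraph V arc"
    and "card V = n"
    and "locatable V arc"
    and "gamma_OL V arc = n"
    and "v \<in> V"
  shows "(\<not> domination_forced V arc v \<longrightarrow> location_forced V arc v)
     \<and> (\<not> location_forced V arc v \<longrightarrow> domination_forced V arc v)"
proof -
  have "finite V" using assms(1) unfolding digraph_def by simp
  moreover have "gamma_OL V arc = card V" using assms(2,4) by simp
  ultimately have "\<not> is_OLD_set V arc (V - {v})"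
    using assms(5) by (rule not_is_OLD_set_delete_if_gamma_OL_eq_card)
  moreover have "is_OLD_set V arc V"
    using assms(3) by (simp only: locatable_iff_is_OLD_set_vertices)
  ultimately have "domination_forced V arc v \<or> location_forced V arc v"
    by (rule forced_if_not_is_OLD_set_delete[rotated])
  then show ?thesis by blast
qed

end
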